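(* Let $p>1$ and let $\mu$ be a probability measure on $G=\mathrm{SL}_2(\mathbb{C})$. If $\int_G\log^p\|g\|\,d\mu(g)<\infty$, then $\xi\mapsto\mathcal{P}_\xi$, as a family of bounded operators on $\mathcal{C}^{\log^{p-1}}$, is continuous in operator norm. If $\int_G\log^{p+1}\|g\|\,d\mu(g)<\infty$, this family is locally Lipschitz continuous in $\xi$.
   Context: $\sigma_g(x)=\log(\|gv\|/\|v\|)$ for $x=[v]\in\mathbb{P}^1$; $\mathcal{P}_\xi u(x)=\int_G e^{i\xi\sigma_g(x)}u(gx)\,d\mu(g)$. With $d([v],[w])=|\det(v,w)|/(\|v\|\|w\|)$ and $\log^\star t=1+|\log t|$: $\|u\|_{\log^q}=\|u\|_\infty+\sup_{x\ne y}|u(x)-u(y)|(\log^\star d(x,y))^q$, and $\mathcal{C}^{\log^q}$ is the Banach space of functions with finite $\|\cdot\|_{\log^q}$. *)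

theory Defs
  imports "HOL-Analysis.Analysis" "HOL-Probability.Probability"
begin

text \<open>Points of the projective line P^1 over C are represented by nonzero vectors
  v :: complex^2 (the point [v]); functions on P^1 are functions on complex^2 that are
  invariant under nonzero scalar multiplication (values at 0 are irrelevant).\<close>

type_synonym cvec = "complex^2"
type_synonym cmat = "complex^2^2"

definition opnorm :: "cmat \<Rightarrow> real" where
  "opnorm g = onorm (\<lambda>v::cvec. g *v v)"

definition cocycle :: "cmat \<Rightarrow> cvec \<Rightarrow> real" where
  "cocycle g v = ln (norm (g *v v) / norm v)"

definition pdist :: "cvec \<Rightarrow> cvec \<Rightarrow> real" where
  "pdist v w = cmod (v$1 * w$2 - v$2 * w$1) / (norm v * norm w)"

definition logstar :: "real \<Rightarrow> real" where
  "logstar t = 1 + \<bar>ln t\<bar>"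

definition Pxi :: "cmat measure \<Rightarrow> real \<Rightarrow> (cvec \<Rightarrow> complex) \<Rightarrow> cvec \<Rightarrow> complex" where
  "Pxi \<mu> \<xi> u v = (LINT g|\<mu>. exp (\<i> * complex_of_real (\<xi> * cocycle g v)) * u (g *v v))"

definition sup_part :: "(cvec \<Rightarrow> complex) \<Rightarrow> real" where
  "sup_part u = (SUP v\<in>{v. v \<noteq> 0}. cmod (u v))"

definition holder_part :: "real \<Rightarrow> (cvec \<Rightarrow> complex) \<Rightarrow> real" where
  "holder_part q u = (SUP vw\<in>{(v,w). v \<noteq> 0 \<and> w \<noteq> 0 \<and> pdist v w \<noteq> 0}.
      cmod (u (fst vw) - u (snd vw)) * logstar (pdist (fst vw) (snd vw)) powr q)"

definition lognorm :: "real \<Rightarrow> (cvec \<Rightarrow> complex) \<Rightarrow> real" where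
  "lognorm q u = sup_part u + holder_part q u"

definition Clog :: "real \<Rightarrow> (cvec \<Rightarrow> complex) set" where
  "Clog q = {u. (\<forall>v c. v \<noteq> 0 \<longrightarrow> c \<noteq> 0 \<longrightarrow> u (c *s v) = u v)
      \<and> bdd_above ((\<lambda>v. cmod (u v)) ` {v. v \<noteq> 0})
      \<and> bdd_above ((\<lambda>(v,w). cmod (u v - u w) * logstar (pdist v w) powr q) `
              {(v,w). v \<noteq> 0 \<and> w \<noteq> 0 \<and> pdist v w \<noteq> 0})}"

end

theory Submission
  imports Defs
begin

(* P_xi and P_xi - P_eta are both of the form u |-> integral of phi(sigma_g x) u(g x) d mu(g),
   with phi(s) = e^(i xi s) and phi(s) = e^(i xi s) - e^(i eta s) respectively; in the second case
   size and oscillation of phi carry the factor |xi - eta|. For det g = 1 one has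
   |sigma_g| <= ln|g|, d(gx, gy) <= |g|^2 d(x, y) and |sigma_g x - sigma_g y| <= 2 |g|^2 d(x, y).
   Comparing d(x, y) with a negative power of |g|, these bound the log^q-Hoelder norm of the
   integrand by a multiple of (1 + ln|g|)^(q+1) times that of u, and for q = p - 1 this weight is
   integrable under the log^p moment. So xi |-> P_xi is even locally Lipschitz under the log^p
   moment alone; the stronger hypothesis of the second claim is used only through it. *)

section \<open>Geometry of the projective line\<close>

definition det2 :: "cvec \<Rightarrow> cvec \<Rightarrow> complex" where
  "det2 v w = v$1 * w$2 - v$2 * w$1"

definition cinner :: "cvec \<Rightarrow> cvec \<Rightarrow> complex" where
  "cinner v w = v$1 * cnj (w$1) + v$2 * cnj (w$2)"

lemma norm_cvec_power2: "norm (v::cvec)^2 = cmod (v$1)^2 + cmod (v$2)^2"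
  by (simp add: norm_vec_def L2_set_def sum_2)

lemma norm_cvec: "norm (v::cvec) = sqrt (cmod (v$1)^2 + cmod (v$2)^2)"
  by (simp add: norm_vec_def L2_set_def sum_2)

lemma cmat_vector_mult_nth:
  "((g::cmat) *v v)$1 = g$1$1 * v$1 + g$1$2 * v$2"
  "((g::cmat) *v v)$2 = g$2$1 * v$1 + g$2$2 * v$2"
  by (simp_all add: matrix_vector_mult_def sum_2)

lemma norm_cvec_scale: "norm (c *s (w::cvec)) = cmod c * norm w"
proof -
  have "norm (c *s w) = sqrt (cmod c ^2 * (cmod (w$1)^2 + cmod (w$2)^2))"
    by (simp add: norm_cvec norm_mult power_mult_distrib algebra_simps)
  thus ?thesis by (simp add: real_sqrt_mult norm_cvec)
qed

lemma sum_mult_le_sqrt_mult: "(a::real) * b + c * d \<le> sqrt (a^2 + c^2) * sqrt (b^2 + d^2)"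
proof -
  have "(a^2 + c^2) * (b^2 + d^2) - (a*b + c*d)^2 = (a*d - c*b)^2"
    by (simp add: power2_eq_square algebra_simps)
  hence "(a*b + c*d)^2 \<le> (a^2 + c^2) * (b^2 + d^2)"
    by (metis diff_ge_0_iff_ge zero_le_power2)
  hence "\<bar>a*b + c*d\<bar> \<le> sqrt ((a^2 + c^2) * (b^2 + d^2))"
    by (simp add: real_le_rsqrt)
  thus ?thesis by (simp add: real_sqrt_mult)
qed

lemma norm_det2_le: "cmod (det2 v w) \<le> norm v * norm w"
proof -
  have "cmod (det2 v w) \<le> cmod (v$1) * cmod (w$2) + cmod (v$2) * cmod (w$1)"
    unfolding det2_def by (metis norm_mult norm_triangle_ineq4)
  also have "\<dots> \<le> sqrt (cmod (v$1)^2 + cmod (v$2)^2) * sqrt (cmod (w$2)^2 + cmod (w$1)^2)"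
    by (rule sum_mult_le_sqrt_mult)
  finally show ?thesis by (simp add: norm_cvec add.commute)
qed

lemma det2_matrix_vector_mult: "det2 (g *v v) (g *v w) = det g * det2 v w"
  by (simp add: det2_def cmat_vector_mult_nth det_2 algebra_simps)

lemma norm_cinner_power2_add: "cmod (cinner v w)^2 + cmod (det2 v w)^2 = norm v^2 * norm w^2"
proof -
  have "cinner v w * cnj (cinner v w) + det2 v w * cnj (det2 v w)
      = (v$1 * cnj (v$1) + v$2 * cnj (v$2)) * (w$1 * cnj (w$1) + w$2 * cnj (w$2))"
    by (simp add: cinner_def det2_def algebra_simps)
  hence "complex_of_real (cmod (cinner v w)^2 + cmod (det2 v w)^2)
      = complex_of_real (norm v^2 * norm w^2)"
    unfolding of_real_add of_real_mult norm_cvec_power2 complex_norm_square by simp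
  thus ?thesis by (simp only: of_real_eq_iff)
qed

lemma norm_diff_power2_cinner: "norm (v - w)^2 = norm v^2 + norm w^2 - 2 * Re (cinner v w)"
  unfolding norm_cvec_power2 vector_minus_component cinner_def
  by (simp only: cmod_power2) (simp add: power2_eq_square algebra_simps)

lemma exists_det2_eq_norm_mult:
  assumes "v \<noteq> (0::cvec)"
  obtains w where "w \<noteq> 0" "cmod (det2 v w) = norm v * norm w"
proof -
  define w :: cvec where "w = vector [- cnj (v$2), cnj (v$1)]"
  have w1: "w$1 = - cnj (v$2)" and w2: "w$2 = cnj (v$1)" by (simp_all add: w_def)
  have nw: "norm w = norm v" by (simp add: norm_cvec w1 w2 add.commute)
  have "det2 v w = v$1 * cnj (v$1) + v$2 * cnj (v$2)" by (simp add: det2_def w1 w2)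
  also have "\<dots> = of_real (cmod (v$1)^2 + cmod (v$2)^2)"
    by (simp only: complex_norm_square of_real_add)
  finally have "cmod (det2 v w) = norm v^2" by (simp only: norm_cvec_power2 norm_of_real) simp
  moreover have "w \<noteq> 0" using assms nw by auto
  ultimately show ?thesis using that nw by (simp add: power2_eq_square)
qed

lemma pdist_det2: "pdist v w = cmod (det2 v w) / (norm v * norm w)"
  by (simp add: pdist_def det2_def)

lemma pdist_nonneg: "pdist v w \<ge> 0"
  by (simp add: pdist_def)

lemma pdist_le_1: "pdist v w \<le> 1"
proof (cases "norm v * norm w = 0")
  case True thus ?thesis by (auto simp: pdist_def)
next
  case False
  hence "norm v * norm w > 0" by (simp add: less_le)
  thus ?thesis using norm_det2_le[of v w] by (simp add: pdist_det2 divide_le_eq_1)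
qed

lemma pdist_axis: "pdist (axis 1 1) (axis 2 1 :: cvec) = 1"
  by (simp add: pdist_def norm_cvec axis_def)

lemma norm_le_opnorm: "norm (g *v v) \<le> opnorm g * norm v"
  unfolding opnorm_def by (rule onorm) simp

lemma opnorm_nonneg: "opnorm g \<ge> 0"
  unfolding opnorm_def by (rule onorm_pos_le) simp

text \<open>For \<open>det g = 1\<close> the area \<open>|det2 v w|\<close> is preserved, so \<open>g\<close> cannot
  shrink a vector by more than the factor \<open>opnorm g\<close>.\<close>

lemma norm_le_opnorm_mult_norm_apply:
  assumes "det g = 1"
  shows "norm v \<le> opnorm g * norm (g *v v)"
proof (cases "v = 0")
  case False
  then obtain w where w: "w \<noteq> 0" "cmod (det2 v w) = norm v * norm w"
    by (rule exists_det2_eq_norm_mult)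
  have "norm v * norm w = cmod (det2 (g *v v) (g *v w))"
    using w assms by (simp add: det2_matrix_vector_mult)
  also have "\<dots> \<le> norm (g *v v) * norm (g *v w)" by (rule norm_det2_le)
  also have "\<dots> \<le> norm (g *v v) * (opnorm g * norm w)"
    by (intro mult_left_mono norm_le_opnorm) simp
  finally have "norm v * norm w \<le> (opnorm g * norm (g *v v)) * norm w"
    by (simp add: algebra_simps)
  thus ?thesis using w(1) by simp
qed (simp add: opnorm_nonneg)

lemma opnorm_ge_1:
  assumes "det g = 1"
  shows "opnorm g \<ge> 1"
proof -
  define v :: cvec where "v = axis 1 1"
  have v: "v \<noteq> 0" by (simp add: v_def)
  have "norm v \<le> opnorm g * norm (g *v v)" by (rule norm_le_opnorm_mult_norm_apply[OF assms])
  also have "\<dots> \<le> opnorm g * (opnorm g * norm v)"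
    by (intro mult_left_mono norm_le_opnorm opnorm_nonneg)
  finally have "1 * norm v \<le> (opnorm g)^2 * norm v"
    by (simp add: power2_eq_square algebra_simps)
  hence "1 \<le> (opnorm g)^2" using v by simp
  thus ?thesis using opnorm_nonneg[of g] abs_le_square_iff[of 1 "opnorm g"] by simp
qed

lemma matrix_vector_mult_nonzero: "det (g::cmat) = 1 \<Longrightarrow> v \<noteq> 0 \<Longrightarrow> g *v v \<noteq> 0"
  using norm_le_opnorm_mult_norm_apply[of g v] by auto

lemma pdist_matrix_vector_mult_le:
  assumes "det g = 1" "v \<noteq> 0" "w \<noteq> 0"
  shows "pdist (g *v v) (g *v w) \<le> (opnorm g)^2 * pdist v w"
proof -
  let ?N = "opnorm g"
  have N: "?N \<ge> 1" by (rule opnorm_ge_1[OF assms(1)])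
  have "norm v \<le> ?N * norm (g *v v)" "norm w \<le> ?N * norm (g *v w)"
    using norm_le_opnorm_mult_norm_apply assms by auto
  hence "norm v * norm w \<le> (?N * norm (g *v v)) * (?N * norm (g *v w))"
    by (intro mult_mono) (auto simp: opnorm_nonneg)
  hence le: "norm v * norm w \<le> ?N^2 * (norm (g *v v) * norm (g *v w))"
    by (simp add: power2_eq_square algebra_simps)
  have pos: "norm v * norm w > 0" using assms by simp
  have "pdist (g *v v) (g *v w) = cmod (det2 v w) / (norm (g *v v) * norm (g *v w))"
    using assms(1) by (simp add: pdist_det2 det2_matrix_vector_mult)
  also have "\<dots> \<le> cmod (det2 v w) / (norm v * norm w / ?N^2)"
  proof (rule divide_left_mono)
    show "norm v * norm w / ?N^2 \<le> norm (g *v v) * norm (g *v w)"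
      using le N by (simp add: divide_le_eq mult.commute)
    show "0 < norm (g *v v) * norm (g *v w) * (norm v * norm w / ?N^2)"
      using matrix_vector_mult_nonzero[OF assms(1)] assms(2,3) pos N by simp
  qed simp
  also have "\<dots> = ?N^2 * pdist v w" by (simp add: pdist_det2)
  finally show ?thesis .
qed

lemma abs_cocycle_le:
  assumes "det g = 1" "v \<noteq> 0"
  shows "\<bar>cocycle g v\<bar> \<le> ln (opnorm g)"
proof -
  let ?N = "opnorm g"
  have N: "?N \<ge> 1" by (rule opnorm_ge_1[OF assms(1)])
  have nz: "norm (g *v v) > 0" using matrix_vector_mult_nonzero[OF assms] by simp
  have nv: "norm v > 0" using assms by simp
  have up: "norm (g *v v) / norm v \<le> ?N"
    using norm_le_opnorm[of g v] nv by (simp add: divide_le_eq)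
  have lo: "1 / ?N \<le> norm (g *v v) / norm v"
    using norm_le_opnorm_mult_norm_apply[OF assms(1)] nv N by (simp add: field_simps)
  have "ln (norm (g *v v) / norm v) \<le> ln ?N"
    using up nz nv N by (subst ln_le_cancel_iff) auto
  moreover have "- ln ?N \<le> ln (norm (g *v v) / norm v)"
    using ln_le_cancel_iff[of "1/?N" "norm (g *v v) / norm v"] lo N nz nv by (simp add: ln_div)
  ultimately show ?thesis unfolding cocycle_def by linarith
qed

lemma cocycle_scale: "c \<noteq> 0 \<Longrightarrow> cocycle g (c *s w) = cocycle g w"
  by (simp add: cocycle_def vector_scalar_commute norm_cvec_scale)

lemma abs_ln_diff_le:
  fixes x y m :: real
  assumes "m > 0" "m \<le> x" "m \<le> y"
  shows "\<bar>ln x - ln y\<bar> \<le> \<bar>x - y\<bar> / m"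
proof -
  have "ln a - ln b \<le> \<bar>a - b\<bar> / m" if "m \<le> a" "m \<le> b" for a b
  proof -
    have a: "a > 0" and b: "b > 0" using assms that by linarith+
    have "ln a - ln b = ln (a / b)" using a b by (simp add: ln_div)
    also have "\<dots> \<le> a / b - 1" using a b by (intro ln_le_minus_one) simp
    also have "\<dots> = (a - b) / b" using b by (simp add: field_simps)
    also have "\<dots> \<le> \<bar>a - b\<bar> / m" using assms that b
      by (meson abs_ge_self abs_ge_zero frac_le order_trans)
    finally show ?thesis .
  qed
  from this[of x y] this[of y x] assms show ?thesis by (simp add: abs_minus_commute)
qed

text \<open>The representative of \<open>[w]\<close> of the same norm as \<open>v\<close> and with \<open>cinner v w\<close>
  real and positive lies within \<open>2 |v| d([v],[w])\<close> of \<open>v\<close>.\<close>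

lemma exists_scaled_close:
  assumes v: "v \<noteq> 0" and w: "w \<noteq> 0" and d1: "pdist v w < 1"
  obtains c where "c \<noteq> 0" "norm (c *s w) = norm v" "norm (v - c *s w) \<le> 2 * norm v * pdist v w"
proof -
  define d where "d = pdist v w"
  have nv: "norm v > 0" and nw: "norm w > 0" and P: "norm v * norm w > 0" using v w by auto
  have d0: "d \<ge> 0" by (simp add: d_def pdist_nonneg)
  have "cmod (det2 v w) = d * (norm v * norm w)"
    using v w by (simp add: d_def pdist_det2)
  hence L: "cmod (cinner v w)^2 + d^2 * (norm v * norm w)^2 = (norm v * norm w)^2"
    using norm_cinner_power2_add[of v w] by (simp add: power_mult_distrib)
  have ipnz: "cinner v w \<noteq> 0"
  proof
    assume "cinner v w = 0"
    hence "d^2 = 1" using L v w by simp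
    thus False using d1 d0 unfolding d_def by (simp add: power2_eq_1_iff)
  qed
  define r where "r = cmod (cinner v w) / (norm v * norm w)"
  have r0: "r \<ge> 0" by (simp add: r_def)
  have "r^2 + d^2 = (cmod (cinner v w)^2 + d^2 * (norm v * norm w)^2) / (norm v * norm w)^2"
    using v w by (simp add: r_def power_divide add_divide_distrib)
  hence rd: "r^2 + d^2 = 1" unfolding L using v w by simp
  hence "r^2 \<le> 1^2" by (metis le_add_same_cancel1 zero_le_power2 power_one)
  hence r1: "r \<le> 1" by (rule power2_le_imp_le) simp
  define c where "c = cinner v w / of_real (cmod (cinner v w)) * of_real (norm v / norm w)"
  have cnz: "c \<noteq> 0" using ipnz nv nw by (simp add: c_def)
  have nw': "norm (c *s w) = norm v"
    using ipnz nv nw by (simp add: c_def norm_cvec_scale norm_mult norm_divide)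
  have "cinner v (c *s w) = cnj c * cinner v w" by (simp add: cinner_def algebra_simps)
  also have "\<dots> = (cinner v w * cnj (cinner v w)) / of_real (cmod (cinner v w)) * of_real (norm v / norm w)"
    by (simp add: c_def)
  also have "\<dots> = of_real (cmod (cinner v w)^2) / of_real (cmod (cinner v w)) * of_real (norm v / norm w)"
    by (simp only: complex_norm_square)
  also have "\<dots> = of_real (r * norm v^2)"
    using ipnz nv nw by (simp add: r_def power2_eq_square)
  finally have ip: "Re (cinner v (c *s w)) = r * norm v^2" by simp
  have "norm (v - c *s w)^2 = 2 * norm v^2 * (1 - r)"
    by (simp add: norm_diff_power2_cinner ip nw' algebra_simps)
  also have "\<dots> \<le> 2 * norm v^2 * d^2"
  proof -
    have "r^2 \<le> r" using mult_left_le[OF r1 r0] by (simp add: power2_eq_square)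
    hence "1 - r \<le> d^2" using rd by linarith
    thus ?thesis by (simp add: mult_left_mono)
  qed
  also have "\<dots> \<le> (2 * norm v * d)^2" by (simp add: power_mult_distrib)
  finally have "norm (v - c *s w) \<le> 2 * norm v * d"
    by (rule power2_le_imp_le) (use d0 nv in simp)
  with that cnz nw' show ?thesis by (simp add: d_def)
qed

lemma abs_cocycle_diff_le:
  assumes g: "det g = 1" and v: "v \<noteq> 0" and w: "w \<noteq> 0" and d1: "pdist v w < 1"
  shows "\<bar>cocycle g v - cocycle g w\<bar> \<le> 2 * (opnorm g)^2 * pdist v w"
proof -
  let ?N = "opnorm g"
  obtain c where c: "c \<noteq> 0" and nw': "norm (c *s w) = norm v"
    and close: "norm (v - c *s w) \<le> 2 * norm v * pdist v w"
    using exists_scaled_close[OF v w d1] .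
  define w' where "w' = c *s w"
  have N: "?N \<ge> 1" by (rule opnorm_ge_1[OF g])
  have nv: "norm v > 0" using v by simp
  have w': "w' \<noteq> 0" using nw' nv by (auto simp: w'_def)
  have m: "norm v / ?N \<le> norm (g *v v)" "norm v / ?N \<le> norm (g *v w')"
    using norm_le_opnorm_mult_norm_apply[OF g, of v] norm_le_opnorm_mult_norm_apply[OF g, of w']
      nw' N by (auto simp: w'_def divide_le_eq mult.commute)
  have "cocycle g v - cocycle g w = cocycle g v - cocycle g w'"
    by (simp add: w'_def cocycle_scale[OF c])
  also have "\<dots> = ln (norm (g *v v)) - ln (norm (g *v w'))"
    using matrix_vector_mult_nonzero[OF g] v w' nv nw'
    by (simp add: w'_def[symmetric] cocycle_def ln_div)
  finally have "cocycle g v - cocycle g w = ln (norm (g *v v)) - ln (norm (g *v w'))" .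
  hence "\<bar>cocycle g v - cocycle g w\<bar> \<le> \<bar>norm (g *v v) - norm (g *v w')\<bar> / (norm v / ?N)"
    using abs_ln_diff_le[OF _ m] nv N by simp
  also have "\<dots> \<le> norm (g *v (v - w')) / (norm v / ?N)"
    using nv N by (intro divide_right_mono)
      (auto simp: matrix_vector_mult_diff_distrib norm_triangle_ineq3)
  also have "\<dots> \<le> ?N * (2 * norm v * pdist v w) / (norm v / ?N)"
  proof (rule divide_right_mono)
    show "norm (g *v (v - w')) \<le> ?N * (2 * norm v * pdist v w)"
      unfolding w'_def by (rule order_trans[OF norm_le_opnorm mult_left_mono[OF close opnorm_nonneg]])
  qed (use nv N in simp)
  also have "\<dots> = 2 * ?N^2 * pdist v w" using nv N by (simp add: field_simps power2_eq_square)
  finally show ?thesis .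
qed


lemma one_plus_powr_le_exp_half:
  fixes t q :: real
  assumes t: "t \<ge> 0" and q: "q > 0"
  shows "(1 + t) powr q \<le> (max 1 (2*q)) powr q * exp (t/2)"
proof -
  define M where "M = max 1 (2*q)"
  have M1: "M \<ge> 1" and M2: "M \<ge> 2*q" by (auto simp: M_def)
  have "1 + t \<le> M * (1 + t/M)" using M1 by (simp add: field_simps)
  hence "ln (1 + t) \<le> ln (M * (1 + t/M))" using t M1 by (subst ln_le_cancel_iff) auto
  also have "\<dots> = ln M + ln (1 + t/M)"
  proof -
    have "1 + t/M > 0" using t M1 by (simp add: add_pos_nonneg)
    thus ?thesis using M1 by (subst ln_mult) auto
  qed
  also have "ln (1 + t/M) \<le> t/M" using t M1 by (intro ln_add_one_self_le_self) auto
  finally have l: "ln (1 + t) \<le> ln M + t/M" by simp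
  have "q * (t/M) = t * (q/M)" by simp
  also have "\<dots> \<le> t * (1/2)" using t M1 M2 by (intro mult_left_mono) (auto simp: divide_le_eq)
  finally have "q * (t/M) \<le> t/2" by simp
  moreover have "q * ln (1 + t) \<le> q * ln M + q * (t/M)"
    using mult_left_mono[OF l] q by (simp add: distrib_left)
  ultimately have "q * ln (1 + t) \<le> q * ln M + t/2" by linarith
  hence "exp (q * ln (1 + t)) \<le> exp (q * ln M + t/2)" by simp
  moreover have "(1 + t) powr q = exp (q * ln (1 + t))" using t by (simp add: powr_def mult.commute)
  moreover have "M powr q = exp (q * ln M)" using M1 by (simp add: powr_def mult.commute)
  ultimately show ?thesis by (simp add: exp_add M_def)
qed

lemma sqrt_mult_one_minus_ln_powr_le:
  fixes d q :: real
  assumes d: "0 < d" "d \<le> 1" and q: "q > 0"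
  shows "sqrt d * (1 - ln d) powr q \<le> (max 1 (2*q)) powr q"
proof -
  have "sqrt d = d powr (1/2)" using d by (simp add: powr_half_sqrt)
  also have "\<dots> = exp (ln d / 2)" using d by (simp add: powr_def)
  finally have sq: "sqrt d * exp (- ln d / 2) = 1" by (simp add: exp_add[symmetric])
  have "sqrt d * (1 - ln d) powr q \<le> sqrt d * ((max 1 (2*q)) powr q * exp (- ln d / 2))"
    using one_plus_powr_le_exp_half[of "- ln d" q] d q by (intro mult_left_mono) auto
  also have "\<dots> = (max 1 (2*q)) powr q * (sqrt d * exp (- ln d / 2))" by simp
  finally show ?thesis using sq by simp
qed

lemma logstar_eq_one_minus_ln: "0 < d \<Longrightarrow> d \<le> 1 \<Longrightarrow> logstar d = 1 - ln d"
  by (simp add: logstar_def)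


section \<open>Log-Hoelder functions on the projective line\<close>

definition scale_invariant :: "(cvec \<Rightarrow> 'a) \<Rightarrow> bool" where
  "scale_invariant u \<longleftrightarrow> (\<forall>v c. v \<noteq> 0 \<longrightarrow> c \<noteq> 0 \<longrightarrow> u (c *s v) = u v)"

definition log_holder_bounded :: "real \<Rightarrow> real \<Rightarrow> real \<Rightarrow> (cvec \<Rightarrow> complex) \<Rightarrow> bool" where
  "log_holder_bounded q A B u \<longleftrightarrow>
     (\<forall>x. x \<noteq> 0 \<longrightarrow> cmod (u x) \<le> A) \<and>
     (\<forall>x y. x \<noteq> 0 \<longrightarrow> y \<noteq> 0 \<longrightarrow> pdist x y \<noteq> 0 \<longrightarrow>
        cmod (u x - u y) * logstar (pdist x y) powr q \<le> B)"

lemma log_holder_boundedD: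
  assumes "log_holder_bounded q A B u"
  shows "x \<noteq> 0 \<Longrightarrow> cmod (u x) \<le> A"
    and "x \<noteq> 0 \<Longrightarrow> y \<noteq> 0 \<Longrightarrow> pdist x y \<noteq> 0 \<Longrightarrow>
           cmod (u x - u y) * logstar (pdist x y) powr q \<le> B"
  using assms by (auto simp: log_holder_bounded_def)

lemma log_holder_bounded_nonneg:
  assumes "log_holder_bounded q A B u"
  shows "0 \<le> A" "0 \<le> B"
proof -
  have "cmod (u (axis 1 1)) \<le> A" by (rule log_holder_boundedD(1)[OF assms]) simp
  thus "0 \<le> A" using norm_ge_zero order_trans by blast
  have "cmod (u (axis 1 1) - u (axis 2 1)) * logstar (pdist (axis 1 1) (axis 2 1)) powr q \<le> B"
    by (rule log_holder_boundedD(2)[OF assms]) (simp_all add: pdist_axis)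
  thus "0 \<le> B" by (smt (verit) mult_nonneg_nonneg norm_ge_zero powr_ge_zero)
qed

lemma Clog_scale_invariant: "u \<in> Clog q \<Longrightarrow> scale_invariant u"
  by (simp add: Clog_def scale_invariant_def)

lemma Clog_log_holder_bounded:
  assumes "u \<in> Clog q"
  shows "log_holder_bounded q (sup_part u) (holder_part q u) u"
proof -
  have b1: "bdd_above ((\<lambda>v. cmod (u v)) ` {v. v \<noteq> 0})"
    and b2: "bdd_above ((\<lambda>vw. cmod (u (fst vw) - u (snd vw)) * logstar (pdist (fst vw) (snd vw)) powr q) `
          {(v, w). v \<noteq> 0 \<and> w \<noteq> 0 \<and> pdist v w \<noteq> 0})"
    using assms by (auto simp: Clog_def case_prod_beta')
  show ?thesis
    unfolding log_holder_bounded_def sup_part_def holder_part_def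
  proof (intro conjI allI impI)
    fix x :: cvec assume "x \<noteq> 0"
    thus "cmod (u x) \<le> (SUP v\<in>{v. v \<noteq> 0}. cmod (u v))" by (intro cSUP_upper[OF _ b1]) simp
  next
    fix x y :: cvec assume "x \<noteq> 0" "y \<noteq> 0" "pdist x y \<noteq> 0"
    hence "(x, y) \<in> {(v, w). v \<noteq> 0 \<and> w \<noteq> 0 \<and> pdist v w \<noteq> 0}" by simp
    from cSUP_upper[OF this b2]
    show "cmod (u x - u y) * logstar (pdist x y) powr q \<le> (SUP vw\<in>{(v, w). v \<noteq> 0 \<and> w \<noteq> 0 \<and> pdist v w \<noteq> 0}.
        cmod (u (fst vw) - u (snd vw)) * logstar (pdist (fst vw) (snd vw)) powr q)"
      by simp
  qed
qed

lemma Clog_I: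
  assumes "scale_invariant u" "log_holder_bounded q A B u"
  shows "u \<in> Clog q"
  unfolding Clog_def
proof (intro CollectI conjI)
  show "\<forall>v c. v \<noteq> 0 \<longrightarrow> c \<noteq> 0 \<longrightarrow> u (c *s v) = u v"
    using assms(1) by (simp add: scale_invariant_def)
  show "bdd_above ((\<lambda>v. cmod (u v)) ` {v. v \<noteq> 0})"
    using log_holder_boundedD(1)[OF assms(2)] by (intro bdd_aboveI2) auto
  show "bdd_above ((\<lambda>(v, w). cmod (u v - u w) * logstar (pdist v w) powr q) `
          {(v, w). v \<noteq> 0 \<and> w \<noteq> 0 \<and> pdist v w \<noteq> 0})"
    using log_holder_boundedD(2)[OF assms(2)] by (intro bdd_aboveI2) auto
qed

lemma lognorm_le:
  assumes "log_holder_bounded q A B u"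
  shows "lognorm q u \<le> A + B"
proof -
  have "{v::cvec. v \<noteq> 0} \<noteq> {}" by (auto intro: exI[of _ "axis 1 1"])
  hence "sup_part u \<le> A"
    unfolding sup_part_def by (intro cSUP_least) (auto intro: log_holder_boundedD(1)[OF assms])
  moreover have "{(v::cvec, w). v \<noteq> 0 \<and> w \<noteq> 0 \<and> pdist v w \<noteq> 0} \<noteq> {}"
  proof -
    have "(axis 1 1, axis 2 1) \<in> {(v::cvec, w). v \<noteq> 0 \<and> w \<noteq> 0 \<and> pdist v w \<noteq> 0}"
      by (simp add: pdist_axis)
    thus ?thesis by blast
  qed
  hence "holder_part q u \<le> B"
    unfolding holder_part_def by (intro cSUP_least) (auto intro: log_holder_boundedD(2)[OF assms])
  ultimately show ?thesis by (simp add: lognorm_def)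
qed

lemma lognorm_nonneg: "u \<in> Clog q \<Longrightarrow> 0 \<le> lognorm q u"
  using log_holder_bounded_nonneg[OF Clog_log_holder_bounded] by (simp add: lognorm_def)

lemma det2_eq_0_imp_scale:
  assumes v: "v \<noteq> (0::cvec)" and w: "w \<noteq> 0" and d: "det2 v w = 0"
  obtains c where "c \<noteq> 0" "w = c *s v"
proof (cases "v$1 = 0")
  case False
  define c where "c = w$1 / v$1"
  have "w = c *s v" using d False by (simp add: vec_eq_iff forall_2 c_def det2_def field_simps)
  moreover have "c \<noteq> 0" using w calculation by auto
  ultimately show ?thesis using that by blast
next
  case True
  hence v2: "v$2 \<noteq> 0" using v by (auto simp: vec_eq_iff forall_2)
  define c where "c = w$2 / v$2"
  have "w = c *s v" using d True v2 by (simp add: vec_eq_iff forall_2 c_def det2_def)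
  moreover have "c \<noteq> 0" using w calculation by auto
  ultimately show ?thesis using that by blast
qed

lemma pdist_le_norm_diff:
  assumes "v \<noteq> 0" "w \<noteq> 0"
  shows "pdist v w \<le> norm (w - v) / norm w"
proof -
  have "det2 v w = det2 v (w - v)" by (simp add: det2_def algebra_simps)
  hence "cmod (det2 v w) \<le> norm v * norm (w - v)" using norm_det2_le[of v "w - v"] by simp
  hence "cmod (det2 v w) / (norm v * norm w) \<le> norm v * norm (w - v) / (norm v * norm w)"
    using assms by (intro divide_right_mono) auto
  thus ?thesis using assms by (simp add: pdist_det2)
qed

lemma pdist_less_if_close:
  assumes v: "v \<noteq> 0" and \<eta>: "\<eta> > 0" and close: "norm (w - v) < min (norm v / 2) (\<eta> * norm v / 2)"
  shows "w \<noteq> 0" "pdist v w < \<eta>"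
proof -
  have "norm v \<le> norm w + norm (w - v)" by (metis norm_minus_commute norm_triangle_sub add.commute)
  hence nw: "norm w \<ge> norm v / 2" using close by simp
  thus "w \<noteq> 0" using v by auto
  have nv: "norm v > 0" using v by simp
  have "pdist v w \<le> norm (w - v) / norm w" by (rule pdist_le_norm_diff[OF v \<open>w \<noteq> 0\<close>])
  also have "\<dots> \<le> norm (w - v) / (norm v / 2)" using nw nv \<open>w \<noteq> 0\<close> by (intro divide_left_mono) auto
  also have "\<dots> < \<eta>" using close nv by (simp add: field_simps)
  finally show "pdist v w < \<eta>" .
qed

lemma continuous_on_log_holder:
  assumes q: "q > 0" and inv: "scale_invariant u" and u: "log_holder_bounded q A B u"
  shows "continuous_on (- {0}) u"
  unfolding continuous_on_iff
proof (intro ballI allI impI)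
  fix v :: cvec and e :: real
  assume "v \<in> - {0}" and e: "e > 0"
  hence v: "v \<noteq> 0" by simp
  define T where "T = B / e + 1"
  have T0: "T > 0" using log_holder_bounded_nonneg(2)[OF u] e by (simp add: T_def add_nonneg_pos)
  define \<eta> where "\<eta> = exp (1 - T powr (1/q))"
  define \<delta> where "\<delta> = min (norm v / 2) (\<eta> * norm v / 2)"
  have "dist (u w) (u v) < e" if "dist w v < \<delta>" for w
  proof -
    have w: "w \<noteq> 0" and pe: "pdist v w < \<eta>"
      using pdist_less_if_close[OF v, of \<eta> w] that by (simp_all add: \<eta>_def \<delta>_def dist_norm)
    show ?thesis
    proof (cases "pdist v w = 0")
      case True
      then obtain c where "c \<noteq> 0" "w = c *s v"
        using det2_eq_0_imp_scale[OF v w] v w by (auto simp: pdist_det2)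
      thus ?thesis using inv v e by (simp add: scale_invariant_def)
    next
      case False
      define d where "d = pdist v w"
      have d0: "0 < d" and d1: "d \<le> 1" using False pdist_nonneg[of v w] pdist_le_1[of v w]
        by (simp_all add: d_def)
      have "ln d < ln \<eta>" using d0 pe by (simp add: d_def)
      hence "T powr (1/q) < logstar d" by (simp add: logstar_eq_one_minus_ln[OF d0 d1] \<eta>_def)
      hence "(T powr (1/q)) powr q < logstar d powr q" using T0 q by (intro powr_less_mono2) auto
      hence TL: "T < logstar d powr q" using T0 q by (simp add: powr_powr)
      have "cmod (u v - u w) * logstar d powr q \<le> B"
        using log_holder_boundedD(2)[OF u v w False] by (simp add: d_def)
      also have "\<dots> < e * logstar d powr q" using TL e by (simp add: T_def field_simps)
      finally have "cmod (u v - u w) < e" by (rule mult_right_less_imp_less) (use TL T0 in simp)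
      thus ?thesis by (simp add: dist_norm norm_minus_commute)
    qed
  qed
  moreover have "\<delta> > 0" using v by (simp add: \<delta>_def \<eta>_def)
  ultimately show "\<exists>d>0. \<forall>w\<in>- {0}. dist w v < d \<longrightarrow> dist (u w) (u v) < e" by blast
qed

lemma Clog_borel_measurable:
  assumes "q > 0" "u \<in> Clog q"
  shows "u \<in> borel_measurable borel"
proof -
  have "continuous_on (- {0}) u"
    using continuous_on_log_holder assms Clog_scale_invariant Clog_log_holder_bounded by blast
  hence "(\<lambda>x. if x \<in> {0} then u x else u x) \<in> borel_measurable borel"
    by (intro borel_measurable_continuous_on_if) auto
  thus ?thesis by simp
qed


section \<open>Pointwise estimates for the integrand\<close>

definition log_weight :: "real \<Rightarrow> cmat \<Rightarrow> real" where
  "log_weight r g = (1 + \<bar>ln (opnorm g)\<bar>) powr r"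

definition log_holder_const :: "real \<Rightarrow> real" where
  "log_holder_const q = 2 powr q + 4 * 4 powr q + 4 * max 1 (2*q) powr q"

lemma log_weight_add_one:
  assumes "det g = 1"
  shows "log_weight (r + 1) g = (1 + ln (opnorm g)) * (1 + ln (opnorm g)) powr r"
  using opnorm_ge_1[OF assms] by (simp add: log_weight_def powr_add)

lemma log_weight_le:
  assumes "0 \<le> r" "r \<le> p"
  shows "log_weight r g \<le> 2 powr r * (1 + \<bar>ln (opnorm g)\<bar> powr p)"
proof -
  define L where "L = \<bar>ln (opnorm g)\<bar>"
  have L0: "0 \<le> L" by (simp add: L_def)
  have "log_weight r g \<le> (2 * max 1 L) powr r"
    unfolding log_weight_def L_def[symmetric] using assms L0 by (intro powr_mono2) auto
  also have "\<dots> = 2 powr r * max 1 L powr r" by (rule powr_mult)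
  also have "max 1 L powr r \<le> max 1 L powr p" using assms by (intro powr_mono) auto
  also have "\<dots> \<le> 1 + L powr p" by (simp add: max_def)
  finally show ?thesis by (simp add: L_def)
qed

text \<open>Split at \<open>d = |g|\<^sup>-\<^sup>4\<close>: below it the Lipschitz bound \<open>2 |g|\<^sup>2 d \<le> 2 \<surd>d\<close>
  beats the logarithm, above it \<open>logstar d \<le> 1 + 4 ln |g|\<close>.\<close>

lemma min_abs_cocycle_diff_mult_logstar_le:
  assumes g: "det g = 1" and v: "v \<noteq> 0" and w: "w \<noteq> 0" and dn: "pdist v w \<noteq> 0" and q: "q > 0"
  shows "min 1 \<bar>cocycle g v - cocycle g w\<bar> * logstar (pdist v w) powr q
     \<le> (2 * max 1 (2*q) powr q + 4 powr q) * (1 + ln (opnorm g)) powr q"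
proof -
  let ?N = "opnorm g"
  define d where "d = pdist v w"
  define l where "l = ln ?N"
  define M where "M = max 1 (2*q) powr q"
  define S where "S = min 1 \<bar>cocycle g v - cocycle g w\<bar>"
  have N: "?N \<ge> 1" by (rule opnorm_ge_1[OF g])
  have l0: "l \<ge> 0" using N by (simp add: l_def)
  have d0: "0 < d" and d1: "d \<le> 1"
    using dn pdist_nonneg[of v w] pdist_le_1[of v w] by (simp_all add: d_def)
  have a: "logstar d = 1 - ln d" by (rule logstar_eq_one_minus_ln[OF d0 d1])
  have M0: "0 \<le> M" by (simp add: M_def)
  have R1: "1 \<le> (1 + 4 * l) powr q" using l0 q by (intro ge_one_powr_ge_zero) auto
  have S0: "0 \<le> S" and S1: "S \<le> 1" by (simp_all add: S_def)
  have "S * logstar d powr q \<le> 2 * M + (1 + 4 * l) powr q"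
  proof (cases "d = 1")
    case True
    thus ?thesis using a S1 R1 M0 by simp
  next
    case False
    show ?thesis
    proof (cases "d \<le> exp (- 4 * l)")
      case True
      have Nl: "?N = exp l" using N by (simp add: l_def)
      have "(?N^2 * d)^2 = (exp (4*l) * d) * d"
        by (simp add: Nl power2_eq_square exp_add[symmetric] algebra_simps)
      also have "\<dots> \<le> 1 * d"
        using True d0 by (intro mult_right_mono) (auto simp: exp_minus field_simps)
      finally have "?N^2 * d \<le> sqrt d" by (intro real_le_rsqrt) simp
      moreover have "\<bar>cocycle g v - cocycle g w\<bar> \<le> 2 * ?N^2 * d"
        using abs_cocycle_diff_le[OF g v w] False d1 by (simp add: d_def)
      ultimately have "S \<le> 2 * sqrt d" by (simp add: S_def)
      hence "S * logstar d powr q \<le> 2 * (sqrt d * (1 - ln d) powr q)"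
        using a mult_right_mono[of S "2 * sqrt d" "(1 - ln d) powr q"] by simp
      also have "\<dots> \<le> 2 * M"
        using sqrt_mult_one_minus_ln_powr_le[OF d0 d1 q] by (simp add: M_def)
      finally show ?thesis using R1 by linarith
    next
      case False
      hence "ln (exp (- 4 * l)) < ln d" using d0 by (subst ln_less_cancel_iff) auto
      hence "logstar d \<le> 1 + 4 * l" using a by simp
      moreover have "0 \<le> logstar d" by (simp add: logstar_def)
      ultimately have "logstar d powr q \<le> (1 + 4 * l) powr q" using q by (intro powr_mono2) auto
      hence "S * logstar d powr q \<le> 1 * (1 + 4 * l) powr q"
        using S0 S1 by (intro mult_mono) auto
      thus ?thesis using M0 by linarith
    qed
  qed
  also have "\<dots> \<le> (2 * M + 4 powr q) * (1 + l) powr q"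
  proof -
    have X1: "1 \<le> (1 + l) powr q" using l0 q by (intro ge_one_powr_ge_zero) auto
    have "(1 + 4 * l) powr q \<le> (4 * (1 + l)) powr q" using l0 q by (intro powr_mono2) auto
    also have "\<dots> = 4 powr q * (1 + l) powr q" by (rule powr_mult)
    finally show ?thesis using M0 X1 mult_left_mono[OF X1, of "2 * M"] by (simp add: algebra_simps)
  qed
  finally show ?thesis by (simp add: S_def d_def l_def M_def)
qed

text \<open>As \<open>g\<close> distorts \<open>d\<close> by at most \<open>|g|\<^sup>2\<close>, \<open>logstar d \<le> 2 logstar d'\<close> for
  \<open>d' = d(gv, gw)\<close> unless \<open>logstar d < 4 ln |g|\<close>.\<close>

lemma norm_diff_apply_mult_logstar_le:
  assumes g: "det g = 1" and v: "v \<noteq> 0" and w: "w \<noteq> 0" and dn: "pdist v w \<noteq> 0" and q: "q > 0"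
    and u: "log_holder_bounded q A B u"
  shows "cmod (u (g *v v) - u (g *v w)) * logstar (pdist v w) powr q
           \<le> (2 powr q + 2 * 4 powr q) * (A + B) * (1 + ln (opnorm g)) powr q"
proof -
  let ?N = "opnorm g"
  define d where "d = pdist v w"
  define d' where "d' = pdist (g *v v) (g *v w)"
  define l where "l = ln ?N"
  define D where "D = cmod (u (g *v v) - u (g *v w))"
  define X where "X = (1 + l) powr q"
  have A: "A \<ge> 0" and B: "B \<ge> 0" using log_holder_bounded_nonneg[OF u] by auto
  have N: "?N \<ge> 1" by (rule opnorm_ge_1[OF g])
  have l0: "l \<ge> 0" using N by (simp add: l_def)
  have X1: "1 \<le> X" using l0 q by (simp add: X_def ge_one_powr_ge_zero)
  have gv: "g *v v \<noteq> 0" and gw: "g *v w \<noteq> 0" using matrix_vector_mult_nonzero[OF g] v w by auto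
  have d0: "0 < d" and d1: "d \<le> 1"
    using dn pdist_nonneg[of v w] pdist_le_1[of v w] by (simp_all add: d_def)
  have dn': "d' \<noteq> 0" using dn gv gw g by (simp add: d'_def pdist_det2 det2_matrix_vector_mult)
  have d'0: "0 < d'" and d'1: "d' \<le> 1"
    using dn' pdist_nonneg pdist_le_1 by (simp_all add: d'_def order_neq_le_trans)
  have "ln d' \<le> ln (?N^2 * d)"
    using pdist_matrix_vector_mult_le[OF g v w] d'0 by (subst ln_le_cancel_iff) (auto simp: d_def d'_def)
  also have "\<dots> = 2 * l + ln d" using N d0 by (simp add: ln_mult ln_realpow l_def)
  finally have lnd': "ln d' \<le> 2 * l + ln d" .
  define a where "a = 1 - ln d"
  have a1: "a \<ge> 1" using d0 d1 by (simp add: a_def)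
  have a': "a - 2 * l \<le> logstar d'" using lnd' by (simp add: a_def logstar_eq_one_minus_ln[OF d'0 d'1])
  have D0: "D \<ge> 0" by (simp add: D_def)
  have D2: "D \<le> 2 * A"
    using log_holder_boundedD(1)[OF u gv] log_holder_boundedD(1)[OF u gw]
      norm_triangle_ineq4[of "u (g *v v)" "u (g *v w)"] by (simp add: D_def)
  have "D * a powr q \<le> 2 powr q * B + 2 * A * (4 * l) powr q"
  proof (cases "a \<ge> 4 * l")
    case True
    hence "a powr q \<le> (2 * logstar d') powr q" using a1 a' q by (intro powr_mono2) auto
    also have "\<dots> = 2 powr q * logstar d' powr q" by (rule powr_mult)
    finally have "D * a powr q \<le> 2 powr q * (D * logstar d' powr q)"
      using D0 by (simp add: mult_left_mono mult.left_commute)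
    also have "\<dots> \<le> 2 powr q * B"
      using log_holder_boundedD(2)[OF u gv gw dn'[unfolded d'_def]] by (simp add: D_def d'_def)
    moreover have "0 \<le> 2 * A * (4 * l) powr q" using A by simp
    ultimately show ?thesis by linarith
  next
    case False
    hence "a powr q \<le> (4 * l) powr q" using a1 q by (intro powr_mono2) auto
    hence "D * a powr q \<le> (2 * A) * (4 * l) powr q" using D0 D2 by (intro mult_mono) auto
    moreover have "0 \<le> 2 powr q * B" using B by simp
    ultimately show ?thesis by linarith
  qed
  also have "\<dots> \<le> 2 powr q * B * X + 2 * A * (4 powr q * X)"
  proof (rule add_mono)
    show "2 powr q * B \<le> 2 powr q * B * X" using mult_left_mono[OF X1, of "2 powr q * B"] B by simp
    have "(4 * l) powr q \<le> (4 * (1 + l)) powr q" using l0 q by (intro powr_mono2) auto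
    also have "\<dots> = 4 powr q * X" unfolding X_def by (rule powr_mult)
    finally show "2 * A * (4 * l) powr q \<le> 2 * A * (4 powr q * X)" using A by (simp add: mult_left_mono)
  qed
  also have "\<dots> \<le> (2 powr q + 2 * 4 powr q) * (A + B) * X"
    using A B X1 by (simp add: algebra_simps add_mono mult_left_mono)
  moreover have "logstar (pdist v w) = a" using logstar_eq_one_minus_ln[OF d0 d1] by (simp add: a_def d_def)
  ultimately show ?thesis by (simp add: D_def X_def l_def)
qed

lemma norm_mult_diff_mult_le:
  fixes a b x y :: "'a::real_normed_field"
  shows "norm (a * x - b * y) \<le> norm a * norm (x - y) + norm (a - b) * norm y"
proof -
  have "a * x - b * y = a * (x - y) + (a - b) * y" by (simp add: algebra_simps)
  thus ?thesis by (metis norm_mult norm_triangle_ineq)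
qed

lemma norm_multiplier_cocycle_le:
  fixes \<phi> :: "real \<Rightarrow> complex"
  assumes g: "det g = 1" and v: "v \<noteq> 0"
    and \<phi>1: "\<And>s. cmod (\<phi> s) \<le> \<alpha> + \<beta> * \<bar>s\<bar>" and \<alpha>: "\<alpha> \<ge> 0" and \<beta>: "\<beta> \<ge> 0"
  shows "cmod (\<phi> (cocycle g v)) \<le> (\<alpha> + \<beta>) * (1 + ln (opnorm g))"
proof -
  have l0: "0 \<le> ln (opnorm g)" using opnorm_ge_1[OF g] by simp
  have "\<beta> * \<bar>cocycle g v\<bar> \<le> \<beta> * (1 + ln (opnorm g))"
    using abs_cocycle_le[OF g v] \<beta> by (intro mult_left_mono) auto
  moreover have "\<alpha> \<le> \<alpha> * (1 + ln (opnorm g))" using \<alpha> l0 by (simp add: mult_le_cancel_left1)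
  ultimately show ?thesis using \<phi>1[of "cocycle g v"] by (simp add: algebra_simps)
qed

lemma norm_multiplier_cocycle_diff_le:
  fixes \<phi> :: "real \<Rightarrow> complex"
  assumes g: "det g = 1" and v: "v \<noteq> 0" and w: "w \<noteq> 0"
    and \<phi>2: "\<And>s t. cmod (\<phi> s - \<phi> t) \<le> \<gamma> * (1 + \<bar>s\<bar> + \<bar>t\<bar>) * min 1 \<bar>s - t\<bar>" and \<gamma>: "\<gamma> \<ge> 0"
  shows "cmod (\<phi> (cocycle g v) - \<phi> (cocycle g w))
           \<le> \<gamma> * (2 * (1 + ln (opnorm g))) * min 1 \<bar>cocycle g v - cocycle g w\<bar>"
proof -
  have "\<gamma> * (1 + \<bar>cocycle g v\<bar> + \<bar>cocycle g w\<bar>) \<le> \<gamma> * (2 * (1 + ln (opnorm g)))"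
    using abs_cocycle_le[OF g v] abs_cocycle_le[OF g w] \<gamma> by (intro mult_left_mono) auto
  hence "\<gamma> * (1 + \<bar>cocycle g v\<bar> + \<bar>cocycle g w\<bar>) * min 1 \<bar>cocycle g v - cocycle g w\<bar>
      \<le> \<gamma> * (2 * (1 + ln (opnorm g))) * min 1 \<bar>cocycle g v - cocycle g w\<bar>"
    by (rule mult_right_mono) simp
  with \<phi>2[of "cocycle g v" "cocycle g w"] show ?thesis by linarith
qed

lemma integrand_diff_mult_logstar_le:
  fixes \<phi> :: "real \<Rightarrow> complex"
  assumes g: "det g = 1" and v: "v \<noteq> 0" and w: "w \<noteq> 0" and dn: "pdist v w \<noteq> 0" and q: "q > 0"
    and u: "log_holder_bounded q A B u"
    and \<phi>1: "\<And>s. cmod (\<phi> s) \<le> \<alpha> + \<beta> * \<bar>s\<bar>"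
    and \<phi>2: "\<And>s t. cmod (\<phi> s - \<phi> t) \<le> \<gamma> * (1 + \<bar>s\<bar> + \<bar>t\<bar>) * min 1 \<bar>s - t\<bar>"
    and \<alpha>: "\<alpha> \<ge> 0" and \<beta>: "\<beta> \<ge> 0" and \<gamma>: "\<gamma> \<ge> 0"
  shows "cmod (\<phi> (cocycle g v) * u (g *v v) - \<phi> (cocycle g w) * u (g *v w)) * logstar (pdist v w) powr q
     \<le> (\<alpha> + \<beta> + \<gamma>) * log_holder_const q * (A + B) * log_weight (q + 1) g"
proof -
  define l where "l = ln (opnorm g)"
  define m where "m = 1 + l"
  define X where "X = m powr q"
  define P where "P = logstar (pdist v w) powr q"
  define s where "s = cocycle g v"
  define t where "t = cocycle g w"
  define S where "S = min 1 \<bar>s - t\<bar>"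
  define M where "M = max 1 (2*q) powr q"
  define K1 where "K1 = 2 powr q + 2 * 4 powr q"
  define K2 where "K2 = 2 * (2 * M + 4 powr q)"
  have A: "A \<ge> 0" and B: "B \<ge> 0" using log_holder_bounded_nonneg[OF u] by auto
  have l0: "l \<ge> 0" using opnorm_ge_1[OF g] by (simp add: l_def)
  have m1: "m \<ge> 1" using l0 by (simp add: m_def)
  have mX: "0 \<le> m * X" using m1 by (simp add: X_def)
  have P0: "P \<ge> 0" and S0: "S \<ge> 0" by (simp_all add: P_def S_def)
  have K: "0 \<le> K1" "K1 \<le> log_holder_const q" "0 \<le> K2" "K2 \<le> log_holder_const q"
    by (auto simp: K1_def K2_def M_def log_holder_const_def)
  have gw: "g *v w \<noteq> 0" using matrix_vector_mult_nonzero[OF g w] .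
  have uT: "cmod (u (g *v v) - u (g *v w)) * P \<le> K1 * (A + B) * X"
    using norm_diff_apply_mult_logstar_le[OF g v w dn q u] by (simp add: K1_def P_def X_def m_def l_def)
  have sT: "S * P \<le> (2 * M + 4 powr q) * X"
    using min_abs_cocycle_diff_mult_logstar_le[OF g v w dn q]
    by (simp add: S_def P_def s_def t_def M_def X_def m_def l_def)
  have ph1: "cmod (\<phi> s) \<le> (\<alpha> + \<beta>) * m"
    using norm_multiplier_cocycle_le[OF g v \<phi>1 \<alpha> \<beta>] by (simp add: s_def m_def l_def)
  have ph2: "cmod (\<phi> s - \<phi> t) \<le> \<gamma> * (2 * m) * S"
    using norm_multiplier_cocycle_diff_le[OF g v w \<phi>2 \<gamma>] by (simp add: s_def t_def S_def m_def l_def)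
  have "cmod (\<phi> s * u (g *v v) - \<phi> t * u (g *v w)) * P
      \<le> cmod (\<phi> s) * (cmod (u (g *v v) - u (g *v w)) * P) + \<gamma> * (2 * m) * A * (S * P)"
  proof -
    have "cmod (\<phi> s - \<phi> t) * cmod (u (g *v w)) \<le> (\<gamma> * (2 * m) * S) * A"
      using ph2 log_holder_boundedD(1)[OF u gw] S0 \<gamma> m1 by (intro mult_mono) auto
    with norm_mult_diff_mult_le[of "\<phi> s" "u (g *v v)" "\<phi> t" "u (g *v w)"]
    have "cmod (\<phi> s * u (g *v v) - \<phi> t * u (g *v w))
        \<le> cmod (\<phi> s) * cmod (u (g *v v) - u (g *v w)) + \<gamma> * (2 * m) * S * A"
      by linarith
    from mult_right_mono[OF this P0] show ?thesis by (simp add: algebra_simps)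
  qed
  also have "\<dots> \<le> ((\<alpha> + \<beta>) * m) * (K1 * (A + B) * X) + \<gamma> * (2 * m) * A * ((2 * M + 4 powr q) * X)"
  proof (rule add_mono)
    show "cmod (\<phi> s) * (cmod (u (g *v v) - u (g *v w)) * P) \<le> ((\<alpha> + \<beta>) * m) * (K1 * (A + B) * X)"
      using ph1 uT \<alpha> \<beta> m1 P0 by (rule_tac mult_mono) auto
    show "\<gamma> * (2 * m) * A * (S * P) \<le> \<gamma> * (2 * m) * A * ((2 * M + 4 powr q) * X)"
      using sT \<gamma> m1 A by (intro mult_left_mono) auto
  qed
  also have "\<dots> = (\<alpha> + \<beta>) * K1 * (A + B) * (m * X) + \<gamma> * K2 * A * (m * X)"
    by (simp add: K2_def algebra_simps)
  also have "\<dots> \<le> (\<alpha> + \<beta>) * log_holder_const q * (A + B) * (m * X)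
      + \<gamma> * log_holder_const q * (A + B) * (m * X)"
  proof (rule add_mono)
    show "(\<alpha> + \<beta>) * K1 * (A + B) * (m * X) \<le> (\<alpha> + \<beta>) * log_holder_const q * (A + B) * (m * X)"
      using K \<alpha> \<beta> A B mX by (intro mult_right_mono mult_left_mono) auto
    show "\<gamma> * K2 * A * (m * X) \<le> \<gamma> * log_holder_const q * (A + B) * (m * X)"
      using K \<gamma> A B mX by (intro mult_right_mono mult_mono) auto
  qed
  also have "\<dots> = (\<alpha> + \<beta> + \<gamma>) * log_holder_const q * (A + B) * log_weight (q + 1) g"
    unfolding log_weight_add_one[OF g] by (simp add: X_def m_def l_def algebra_simps)
  finally show ?thesis by (simp add: s_def t_def P_def)
qed

lemma norm_integrand_le:
  fixes \<phi> :: "real \<Rightarrow> complex"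
  assumes g: "det g = 1" and v: "v \<noteq> 0" and q: "q > 0" and u: "log_holder_bounded q A B u"
    and \<phi>1: "\<And>s. cmod (\<phi> s) \<le> \<alpha> + \<beta> * \<bar>s\<bar>"
    and \<alpha>: "\<alpha> \<ge> 0" and \<beta>: "\<beta> \<ge> 0" and \<gamma>: "\<gamma> \<ge> 0"
  shows "cmod (\<phi> (cocycle g v) * u (g *v v))
     \<le> (\<alpha> + \<beta> + \<gamma>) * log_holder_const q * (A + B) * log_weight (q + 1) g"
proof -
  define m where "m = 1 + ln (opnorm g)"
  define X where "X = m powr q"
  have A: "A \<ge> 0" and B: "B \<ge> 0" using log_holder_bounded_nonneg[OF u] by auto
  have m1: "m \<ge> 1" using opnorm_ge_1[OF g] by (simp add: m_def)
  have X1: "X \<ge> 1" unfolding X_def using m1 q by (intro ge_one_powr_ge_zero) auto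
  have K1: "1 \<le> log_holder_const q"
    using ge_one_powr_ge_zero[of 2 q] q by (simp add: log_holder_const_def add_increasing2)
  have ph1: "cmod (\<phi> (cocycle g v)) \<le> (\<alpha> + \<beta>) * m"
    using norm_multiplier_cocycle_le[OF g v \<phi>1 \<alpha> \<beta>] by (simp add: m_def)
  have "cmod (\<phi> (cocycle g v) * u (g *v v)) \<le> ((\<alpha> + \<beta>) * m) * A"
    unfolding norm_mult
    using ph1 log_holder_boundedD(1)[OF u matrix_vector_mult_nonzero[OF g v]] A \<alpha> \<beta> m1
    by (intro mult_mono) auto
  also have "\<dots> \<le> ((\<alpha> + \<beta> + \<gamma>) * (m * X)) * (log_holder_const q * (A + B))"
  proof (rule mult_mono)
    have "m \<le> m * X" using m1 X1 by (simp add: mult_le_cancel_left1)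
    thus "(\<alpha> + \<beta>) * m \<le> (\<alpha> + \<beta> + \<gamma>) * (m * X)" using \<alpha> \<beta> \<gamma> m1 by (intro mult_mono) auto
    have "A \<le> 1 * (A + B)" using B by simp
    also have "\<dots> \<le> log_holder_const q * (A + B)" using K1 A B by (intro mult_right_mono) auto
    finally show "A \<le> log_holder_const q * (A + B)" .
  qed (use \<alpha> \<beta> \<gamma> m1 X1 A in auto)
  also have "\<dots> = (\<alpha> + \<beta> + \<gamma>) * log_holder_const q * (A + B) * log_weight (q + 1) g"
    unfolding log_weight_add_one[OF g] by (simp add: X_def m_def algebra_simps)
  finally show ?thesis .
qed


lemma norm_cmat_vector_mult_le: "norm ((A::cmat) *v x) \<le> norm A * norm x"
proof -
  have row: "cmod ((A *v x)$i) \<le> norm (A$i) * norm x" for i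
  proof -
    have "cmod ((A *v x)$i) \<le> cmod (A$i$1) * cmod (x$1) + cmod (A$i$2) * cmod (x$2)"
      unfolding matrix_vector_mult_def by (simp add: sum_2) (metis norm_mult norm_triangle_ineq)
    also have "\<dots> \<le> norm (A$i) * norm x" unfolding norm_cvec by (rule sum_mult_le_sqrt_mult)
    finally show ?thesis .
  qed
  have "norm (A *v x)^2 \<le> (norm (A$1) * norm x)^2 + (norm (A$2) * norm x)^2"
    unfolding norm_cvec_power2 using row[of 1] row[of 2] by (intro add_mono power_mono) auto
  also have "\<dots> = (norm A * norm x)^2"
    by (simp add: norm_vec_def L2_set_def sum_2 power_mult_distrib algebra_simps)
  finally show ?thesis by (rule power2_le_imp_le) simp
qed

lemma abs_opnorm_diff_le: "\<bar>opnorm g - opnorm h\<bar> \<le> norm (g - h)"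
proof -
  have tri: "opnorm a \<le> opnorm (a - b) + opnorm b" for a b :: cmat
  proof -
    have "opnorm a = onorm (\<lambda>x. (a - b) *v x + b *v x)"
      by (simp add: opnorm_def matrix_vector_mult_diff_rdistrib)
    also have "\<dots> \<le> opnorm (a - b) + opnorm b"
      unfolding opnorm_def by (rule onorm_triangle) simp_all
    finally show ?thesis .
  qed
  have le: "opnorm a \<le> norm a" for a :: cmat
    unfolding opnorm_def by (rule onorm_le) (rule norm_cmat_vector_mult_le)
  show ?thesis using tri[of g h] tri[of h g] le[of "g - h"] le[of "h - g"]
    by (simp add: norm_minus_commute)
qed

lemma continuous_on_opnorm: "continuous_on UNIV opnorm"
  unfolding continuous_on_iff
proof (intro ballI allI impI)
  fix g :: cmat and e :: real assume "e > 0"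
  thus "\<exists>d>0. \<forall>h\<in>UNIV. dist h g < d \<longrightarrow> dist (opnorm h) (opnorm g) < e"
    using abs_opnorm_diff_le by (intro exI[of _ e]) (auto simp: dist_norm intro: order.strict_trans1)
qed

lemma borel_measurable_opnorm [measurable]: "opnorm \<in> borel_measurable borel"
  by (rule borel_measurable_continuous_onI[OF continuous_on_opnorm])

lemma borel_measurable_matrix_vector_mult [measurable]: "(\<lambda>g::cmat. g *v v) \<in> borel_measurable borel"
  by (rule borel_measurable_continuous_onI)
    (unfold matrix_vector_mult_def, intro continuous_intros)

lemma borel_measurable_cocycle [measurable]: "(\<lambda>g. cocycle g v) \<in> borel_measurable borel"
  unfolding cocycle_def by measurable


definition admissible_multiplier :: "real \<Rightarrow> real \<Rightarrow> real \<Rightarrow> (real \<Rightarrow> complex) \<Rightarrow> bool" where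
  "admissible_multiplier \<alpha> \<beta> \<gamma> \<phi> \<longleftrightarrow>
     continuous_on UNIV \<phi> \<and> bounded (range \<phi>) \<and> 0 \<le> \<alpha> \<and> 0 \<le> \<beta> \<and> 0 \<le> \<gamma> \<and>
     (\<forall>s. cmod (\<phi> s) \<le> \<alpha> + \<beta> * \<bar>s\<bar>) \<and>
     (\<forall>s t. cmod (\<phi> s - \<phi> t) \<le> \<gamma> * (1 + \<bar>s\<bar> + \<bar>t\<bar>) * min 1 \<bar>s - t\<bar>)"

lemma norm_cis_minus_one_le: "cmod (cis x - 1) \<le> \<bar>x\<bar>"
  using iexp_approx1[of x 0] by (simp add: cis_conv_exp)

lemma norm_cis_diff_le: "cmod (cis x - cis y) \<le> \<bar>x - y\<bar>"
proof -
  have "cis x - cis y = cis y * (cis (x - y) - 1)" by (simp add: algebra_simps cis_mult)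
  thus ?thesis using norm_cis_minus_one_le[of "x - y"] by (simp add: norm_mult)
qed

lemma admissible_multiplier_cis: "admissible_multiplier 1 0 (2 + \<bar>\<xi>\<bar>) (\<lambda>s. cis (\<xi> * s))"
  unfolding admissible_multiplier_def
proof (intro conjI allI)
  fix s t :: real
  have "cmod (cis (\<xi> * s) - cis (\<xi> * t)) \<le> (2 + \<bar>\<xi>\<bar>) * min 1 \<bar>s - t\<bar>"
  proof (cases "\<bar>s - t\<bar> \<le> 1")
    case True
    have "cmod (cis (\<xi> * s) - cis (\<xi> * t)) \<le> \<bar>\<xi>\<bar> * \<bar>s - t\<bar>"
      using norm_cis_diff_le[of "\<xi> * s" "\<xi> * t"] by (simp add: right_diff_distrib[symmetric] abs_mult)
    also have "\<dots> \<le> (2 + \<bar>\<xi>\<bar>) * \<bar>s - t\<bar>" by (intro mult_right_mono) auto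
    finally show ?thesis using True by (simp add: min_def)
  next
    case False
    thus ?thesis using norm_triangle_ineq4[of "cis (\<xi> * s)" "cis (\<xi> * t)"] by (simp add: min_def)
  qed
  also have "\<dots> \<le> (2 + \<bar>\<xi>\<bar>) * min 1 \<bar>s - t\<bar> * (1 + \<bar>s\<bar> + \<bar>t\<bar>)"
    using mult_left_mono[of 1 "1 + \<bar>s\<bar> + \<bar>t\<bar>" "(2 + \<bar>\<xi>\<bar>) * min 1 \<bar>s - t\<bar>"] by simp
  finally show "cmod (cis (\<xi> * s) - cis (\<xi> * t)) \<le> (2 + \<bar>\<xi>\<bar>) * (1 + \<bar>s\<bar> + \<bar>t\<bar>) * min 1 \<bar>s - t\<bar>"
    by (simp only: mult_ac)
next
  show "bounded (range (\<lambda>s. cis (\<xi> * s)))" unfolding bounded_iff by (intro exI[of _ 1]) simp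
qed (auto intro!: continuous_intros)

lemma admissible_multiplier_cis_diff:
  "admissible_multiplier 0 \<bar>\<xi> - \<eta>\<bar> (\<bar>\<xi> - \<eta>\<bar> * (1 + \<bar>\<eta>\<bar>)) (\<lambda>s. cis (\<xi> * s) - cis (\<eta> * s))"
proof -
  define \<delta> where "\<delta> = \<xi> - \<eta>"
  have \<xi>: "cis (\<xi> * s) = cis (\<eta> * s) * cis (\<delta> * s)" for s
    by (simp add: cis_mult \<delta>_def algebra_simps)
  have H1: "cmod (cis (\<xi> * s) - cis (\<eta> * s)) \<le> \<bar>\<delta>\<bar> * \<bar>s\<bar>" for s
    using norm_cis_diff_le[of "\<xi> * s" "\<eta> * s"] by (simp add: \<delta>_def left_diff_distrib[symmetric] abs_mult)
  have H2: "cmod ((cis (\<xi> * s) - cis (\<eta> * s)) - (cis (\<xi> * t) - cis (\<eta> * t)))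
     \<le> (\<bar>\<delta>\<bar> * (1 + \<bar>\<eta>\<bar>)) * (1 + \<bar>s\<bar> + \<bar>t\<bar>) * min 1 \<bar>s - t\<bar>" for s t
  proof (cases "\<bar>s - t\<bar> \<le> 1")
    case False
    have "cmod ((cis (\<xi> * s) - cis (\<eta> * s)) - (cis (\<xi> * t) - cis (\<eta> * t)))
        \<le> cmod (cis (\<xi> * s) - cis (\<eta> * s)) + cmod (cis (\<xi> * t) - cis (\<eta> * t))"
      by (rule norm_triangle_ineq4)
    also have "\<dots> \<le> \<bar>\<delta>\<bar> * \<bar>s\<bar> + \<bar>\<delta>\<bar> * \<bar>t\<bar>" using H1[of s] H1[of t] by (rule add_mono)
    also have "\<dots> \<le> (\<bar>\<delta>\<bar> * (1 + \<bar>\<eta>\<bar>)) * (1 + \<bar>s\<bar> + \<bar>t\<bar>)"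
      using mult_left_mono[of "1 + \<bar>s\<bar> + \<bar>t\<bar>" "(1 + \<bar>\<eta>\<bar>) * (1 + \<bar>s\<bar> + \<bar>t\<bar>)" "\<bar>\<delta>\<bar>"]
      by (simp add: algebra_simps)
    finally show ?thesis using False by (simp add: min_def)
  next
    case True
    have "(cis (\<xi> * s) - cis (\<eta> * s)) - (cis (\<xi> * t) - cis (\<eta> * t))
       = (cis (\<eta> * s) - cis (\<eta> * t)) * (cis (\<delta> * s) - 1) + cis (\<eta> * t) * (cis (\<delta> * s) - cis (\<delta> * t))"
      unfolding \<xi> by (simp add: algebra_simps)
    hence "cmod ((cis (\<xi> * s) - cis (\<eta> * s)) - (cis (\<xi> * t) - cis (\<eta> * t)))
        \<le> cmod (cis (\<eta> * s) - cis (\<eta> * t)) * cmod (cis (\<delta> * s) - 1) + cmod (cis (\<delta> * s) - cis (\<delta> * t))"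
      by (metis norm_triangle_ineq norm_mult norm_cis mult_1)
    also have "\<dots> \<le> (\<bar>\<eta>\<bar> * \<bar>s - t\<bar>) * (\<bar>\<delta>\<bar> * \<bar>s\<bar>) + \<bar>\<delta>\<bar> * \<bar>s - t\<bar>"
    proof (rule add_mono)
      show "cmod (cis (\<eta> * s) - cis (\<eta> * t)) * cmod (cis (\<delta> * s) - 1) \<le> (\<bar>\<eta>\<bar> * \<bar>s - t\<bar>) * (\<bar>\<delta>\<bar> * \<bar>s\<bar>)"
        using norm_cis_diff_le[of "\<eta> * s" "\<eta> * t"] norm_cis_minus_one_le[of "\<delta> * s"]
        by (intro mult_mono) (auto simp: right_diff_distrib[symmetric] abs_mult)
      show "cmod (cis (\<delta> * s) - cis (\<delta> * t)) \<le> \<bar>\<delta>\<bar> * \<bar>s - t\<bar>"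
        using norm_cis_diff_le[of "\<delta> * s" "\<delta> * t"] by (simp add: right_diff_distrib[symmetric] abs_mult)
    qed
    also have "\<dots> = \<bar>\<delta>\<bar> * (1 + \<bar>\<eta>\<bar> * \<bar>s\<bar>) * \<bar>s - t\<bar>" by (simp add: algebra_simps)
    also have "\<dots> \<le> (\<bar>\<delta>\<bar> * (1 + \<bar>\<eta>\<bar>)) * (1 + \<bar>s\<bar> + \<bar>t\<bar>) * \<bar>s - t\<bar>"
    proof (intro mult_right_mono)
      have "1 + \<bar>\<eta>\<bar> * \<bar>s\<bar> \<le> (1 + \<bar>\<eta>\<bar>) * (1 + \<bar>s\<bar> + \<bar>t\<bar>)" by (simp add: algebra_simps)
      thus "\<bar>\<delta>\<bar> * (1 + \<bar>\<eta>\<bar> * \<bar>s\<bar>) \<le> \<bar>\<delta>\<bar> * (1 + \<bar>\<eta>\<bar>) * (1 + \<bar>s\<bar> + \<bar>t\<bar>)"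
        by (simp add: mult.assoc mult_left_mono)
    qed simp
    finally show ?thesis using True by (simp add: min_def)
  qed
  have "bounded (range (\<lambda>s. cis (\<xi> * s) - cis (\<eta> * s)))"
    unfolding bounded_iff by (intro exI[of _ 2]) (auto intro!: norm_triangle_le_diff)
  with H1 H2 show ?thesis
    unfolding admissible_multiplier_def \<delta>_def by (auto intro!: continuous_intros)
qed


section \<open>The transfer operators\<close>

definition transfer_op :: "cmat measure \<Rightarrow> (real \<Rightarrow> complex) \<Rightarrow> (cvec \<Rightarrow> complex) \<Rightarrow> cvec \<Rightarrow> complex" where
  "transfer_op \<mu> \<phi> u v = (LINT g|\<mu>. \<phi> (cocycle g v) * u (g *v v))"

lemma Pxi_eq_transfer_op: "Pxi \<mu> \<xi> = transfer_op \<mu> (\<lambda>s. cis (\<xi> * s))"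
  by (simp add: fun_eq_iff Pxi_def transfer_op_def cis_conv_exp)

lemma scale_invariant_transfer_op:
  assumes "scale_invariant u"
  shows "scale_invariant (transfer_op \<mu> \<phi> u)"
proof -
  have "u (c *s y) = u y" if "c \<noteq> 0" for c y
    using assms that by (cases "y = 0") (auto simp: scale_invariant_def)
  thus ?thesis by (simp add: scale_invariant_def transfer_op_def cocycle_scale vector_scalar_commute)
qed

locale sl2_measure = prob_space \<mu> for \<mu> :: "cmat measure" +
  assumes sets_eq: "sets \<mu> = sets borel"
    and AE_det: "AE g in \<mu>. det g = 1"
begin

definition transfer_const :: "real \<Rightarrow> real" where
  "transfer_const q = log_holder_const q * (LINT g|\<mu>. log_weight (q + 1) g)"

lemma measurable_eq: "measurable \<mu> M = measurable borel M"
  by (rule measurable_cong_sets[OF sets_eq refl])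

lemma integrable_log_weight:
  assumes mom: "(\<integral>\<^sup>+ g. ennreal (\<bar>ln (opnorm g)\<bar> powr p) \<partial>\<mu>) < \<infinity>" and r: "0 \<le> r" "r \<le> p"
  shows "integrable \<mu> (log_weight r)"
proof (rule Bochner_Integration.integrable_bound)
  have "integrable \<mu> (\<lambda>g. \<bar>ln (opnorm g)\<bar> powr p)"
    using mom by (intro integrableI_bounded) (auto simp: measurable_eq)
  thus "integrable \<mu> (\<lambda>g. 2 powr r * (1 + \<bar>ln (opnorm g)\<bar> powr p))" by auto
  show "log_weight r \<in> borel_measurable \<mu>" unfolding measurable_eq log_weight_def by measurable
  show "AE g in \<mu>. norm (log_weight r g) \<le> norm (2 powr r * (1 + \<bar>ln (opnorm g)\<bar> powr p))"
    using log_weight_le[OF r] by (intro AE_I2) (simp add: log_weight_def)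
qed

lemma transfer_const_nonneg: "0 \<le> transfer_const q"
  unfolding transfer_const_def log_holder_const_def log_weight_def
  by (intro mult_nonneg_nonneg integral_nonneg_AE) auto

lemma integrable_transfer_integrand:
  assumes \<phi>: "admissible_multiplier \<alpha> \<beta> \<gamma> \<phi>" and q: "q > 0" and u: "u \<in> Clog q"
  shows "integrable \<mu> (\<lambda>g. \<phi> (cocycle g v) * u (g *v v))"
proof -
  obtain \<Phi> where \<Phi>: "\<And>s. cmod (\<phi> s) \<le> \<Phi>"
    using \<phi> by (auto simp: admissible_multiplier_def bounded_iff)
  have "cmod (u y) \<le> max (sup_part u) (cmod (u 0))" for y
    using log_holder_boundedD(1)[OF Clog_log_holder_bounded[OF u], of y] by (cases "y = 0") auto
  hence bound: "AE g in \<mu>. norm (\<phi> (cocycle g v) * u (g *v v)) \<le> \<Phi> * max (sup_part u) (cmod (u 0))"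
    using \<Phi> by (intro AE_I2) (simp add: norm_mult mult_mono' order_trans[OF norm_ge_zero \<Phi>])
  have [measurable]: "\<phi> \<in> borel_measurable borel"
    using \<phi> by (simp add: admissible_multiplier_def borel_measurable_continuous_onI)
  have [measurable]: "u \<in> borel_measurable borel" by (rule Clog_borel_measurable[OF q u])
  have "(\<lambda>g. \<phi> (cocycle g v) * u (g *v v)) \<in> borel_measurable \<mu>"
    unfolding measurable_eq by measurable
  with bound show ?thesis by (rule integrable_const_bound)
qed

lemma transfer_op_log_holder_bounded:
  assumes q: "q > 0" and W: "integrable \<mu> (log_weight (q + 1))"
    and \<phi>: "admissible_multiplier \<alpha> \<beta> \<gamma> \<phi>" and u: "u \<in> Clog q"
  defines "C \<equiv> (\<alpha> + \<beta> + \<gamma>) * transfer_const q * lognorm q u"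
  shows "log_holder_bounded q C C (transfer_op \<mu> \<phi> u)"
proof -
  define c where "c = (\<alpha> + \<beta> + \<gamma>) * log_holder_const q * lognorm q u"
  have ub: "log_holder_bounded q (sup_part u) (holder_part q u) u"
    by (rule Clog_log_holder_bounded[OF u])
  have AB: "sup_part u + holder_part q u = lognorm q u" by (simp add: lognorm_def)
  have \<alpha>: "0 \<le> \<alpha>" and \<beta>: "0 \<le> \<beta>" and \<gamma>: "0 \<le> \<gamma>"
    and \<phi>1: "\<And>s. cmod (\<phi> s) \<le> \<alpha> + \<beta> * \<bar>s\<bar>"
    and \<phi>2: "\<And>s t. cmod (\<phi> s - \<phi> t) \<le> \<gamma> * (1 + \<bar>s\<bar> + \<bar>t\<bar>) * min 1 \<bar>s - t\<bar>"
    using \<phi> by (auto simp: admissible_multiplier_def)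
  have I: "integrable \<mu> (\<lambda>g. \<phi> (cocycle g x) * u (g *v x))" for x
    by (rule integrable_transfer_integrand[OF \<phi> q u])
  have bound: "(LINT g|\<mu>. f g) \<le> C"
    if f: "integrable \<mu> f" and fc: "\<And>g. det g = 1 \<Longrightarrow> f g \<le> c * log_weight (q + 1) g" for f
  proof -
    have "AE g in \<mu>. f g \<le> c * log_weight (q + 1) g" using AE_det by eventually_elim (rule fc)
    hence "(LINT g|\<mu>. f g) \<le> (LINT g|\<mu>. c * log_weight (q + 1) g)"
      using f W by (intro integral_mono_AE) auto
    thus ?thesis by (simp add: C_def c_def transfer_const_def mult_ac)
  qed
  show ?thesis
    unfolding log_holder_bounded_def
  proof (intro conjI allI impI)
    fix v :: cvec assume v: "v \<noteq> 0"
    have "cmod (transfer_op \<mu> \<phi> u v) \<le> (LINT g|\<mu>. cmod (\<phi> (cocycle g v) * u (g *v v)))"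
      unfolding transfer_op_def by (rule integral_norm_bound)
    also have "\<dots> \<le> C"
      using I norm_integrand_le[OF _ v q ub \<phi>1 \<alpha> \<beta> \<gamma>] by (intro bound) (auto simp: c_def AB)
    finally show "cmod (transfer_op \<mu> \<phi> u v) \<le> C" .
  next
    fix v w :: cvec assume v: "v \<noteq> 0" and w: "w \<noteq> 0" and dn: "pdist v w \<noteq> 0"
    define f where "f g = \<phi> (cocycle g v) * u (g *v v) - \<phi> (cocycle g w) * u (g *v w)" for g
    define P where "P = logstar (pdist v w) powr q"
    have "transfer_op \<mu> \<phi> u v - transfer_op \<mu> \<phi> u w = (LINT g|\<mu>. f g)"
      unfolding transfer_op_def f_def by (rule Bochner_Integration.integral_diff[symmetric, OF I I])
    hence "cmod (transfer_op \<mu> \<phi> u v - transfer_op \<mu> \<phi> u w) * P \<le> (LINT g|\<mu>. cmod (f g)) * P"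
      by (simp add: P_def mult_right_mono)
    also have "\<dots> = (LINT g|\<mu>. cmod (f g) * P)" by simp
    also have "\<dots> \<le> C"
      using I integrand_diff_mult_logstar_le[OF _ v w dn q ub \<phi>1 \<phi>2 \<alpha> \<beta> \<gamma>]
      by (intro bound) (auto simp: f_def P_def c_def AB)
    finally show "cmod (transfer_op \<mu> \<phi> u v - transfer_op \<mu> \<phi> u w) * logstar (pdist v w) powr q \<le> C"
      by (simp add: P_def)
  qed
qed

lemma transfer_op_Clog:
  assumes "q > 0" "integrable \<mu> (log_weight (q + 1))" "admissible_multiplier \<alpha> \<beta> \<gamma> \<phi>" "u \<in> Clog q"
  shows "transfer_op \<mu> \<phi> u \<in> Clog q"
    and "lognorm q (transfer_op \<mu> \<phi> u) \<le> 2 * (\<alpha> + \<beta> + \<gamma>) * transfer_const q * lognorm q u"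
proof -
  note bounded = transfer_op_log_holder_bounded[OF assms]
  show "transfer_op \<mu> \<phi> u \<in> Clog q"
    by (rule Clog_I[OF scale_invariant_transfer_op[OF Clog_scale_invariant[OF assms(4)]] bounded])
  show "lognorm q (transfer_op \<mu> \<phi> u) \<le> 2 * (\<alpha> + \<beta> + \<gamma>) * transfer_const q * lognorm q u"
    using lognorm_le[OF bounded] by (simp add: algebra_simps)
qed

lemma Pxi_diff_eq_transfer_op:
  assumes "q > 0" "u \<in> Clog q"
  shows "(\<lambda>v. Pxi \<mu> \<xi> u v - Pxi \<mu> \<eta> u v) = transfer_op \<mu> (\<lambda>s. cis (\<xi> * s) - cis (\<eta> * s)) u"
proof
  fix v
  have I: "integrable \<mu> (\<lambda>g. cis (\<zeta> * cocycle g v) * u (g *v v))" for \<zeta>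
    by (rule integrable_transfer_integrand[OF admissible_multiplier_cis assms])
  show "Pxi \<mu> \<xi> u v - Pxi \<mu> \<eta> u v = transfer_op \<mu> (\<lambda>s. cis (\<xi> * s) - cis (\<eta> * s)) u v"
    unfolding Pxi_eq_transfer_op transfer_op_def
    by (simp add: Bochner_Integration.integral_diff[OF I I, symmetric] left_diff_distrib)
qed

lemma Pxi_Clog:
  assumes "q > 0" "integrable \<mu> (log_weight (q + 1))" "u \<in> Clog q"
  shows "Pxi \<mu> \<xi> u \<in> Clog q"
    and "lognorm q (Pxi \<mu> \<xi> u) \<le> 2 * (3 + \<bar>\<xi>\<bar>) * transfer_const q * lognorm q u"
  using transfer_op_Clog[OF assms(1,2) admissible_multiplier_cis assms(3)]
  by (simp_all add: Pxi_eq_transfer_op)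

lemma lognorm_Pxi_diff_le:
  assumes "q > 0" "integrable \<mu> (log_weight (q + 1))" "u \<in> Clog q"
  shows "lognorm q (\<lambda>v. Pxi \<mu> \<xi> u v - Pxi \<mu> \<eta> u v)
           \<le> \<bar>\<xi> - \<eta>\<bar> * (2 * (2 + \<bar>\<eta>\<bar>) * transfer_const q) * lognorm q u"
proof -
  have "lognorm q (\<lambda>v. Pxi \<mu> \<xi> u v - Pxi \<mu> \<eta> u v)
      \<le> 2 * (0 + \<bar>\<xi> - \<eta>\<bar> + \<bar>\<xi> - \<eta>\<bar> * (1 + \<bar>\<eta>\<bar>)) * transfer_const q * lognorm q u"
    unfolding Pxi_diff_eq_transfer_op[OF assms(1,3)]
    by (rule transfer_op_Clog(2)[OF assms(1,2) admissible_multiplier_cis_diff assms(3)])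
  thus ?thesis by (simp add: algebra_simps)
qed

lemma Pxi_bounded:
  assumes "q > 0" "integrable \<mu> (log_weight (q + 1))"
  shows "\<forall>\<xi>. \<exists>C. \<forall>u\<in>Clog q. Pxi \<mu> \<xi> u \<in> Clog q \<and> lognorm q (Pxi \<mu> \<xi> u) \<le> C * lognorm q u"
proof
  fix \<xi>
  show "\<exists>C. \<forall>u\<in>Clog q. Pxi \<mu> \<xi> u \<in> Clog q \<and> lognorm q (Pxi \<mu> \<xi> u) \<le> C * lognorm q u"
    using Pxi_Clog[OF assms] by (intro exI[of _ "2 * (3 + \<bar>\<xi>\<bar>) * transfer_const q"]) blast
qed

lemma Pxi_continuous:
  assumes q: "q > 0" and W: "integrable \<mu> (log_weight (q + 1))"
  shows "\<forall>\<xi>0. \<forall>\<epsilon>>0. \<exists>\<delta>>0. \<forall>\<xi>. \<bar>\<xi> - \<xi>0\<bar> < \<delta> \<longrightarrow>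
           (\<forall>u\<in>Clog q. lognorm q (\<lambda>v. Pxi \<mu> \<xi> u v - Pxi \<mu> \<xi>0 u v) \<le> \<epsilon> * lognorm q u)"
proof (intro allI impI)
  fix \<xi>0 \<epsilon> :: real assume \<epsilon>: "\<epsilon> > 0"
  define D where "D = 2 * (2 + \<bar>\<xi>0\<bar>) * transfer_const q"
  have D: "0 \<le> D" using transfer_const_nonneg by (simp add: D_def)
  have "lognorm q (\<lambda>v. Pxi \<mu> \<xi> u v - Pxi \<mu> \<xi>0 u v) \<le> \<epsilon> * lognorm q u"
    if \<xi>: "\<bar>\<xi> - \<xi>0\<bar> < \<epsilon> / (D + 1)" and u: "u \<in> Clog q" for \<xi> u
  proof -
    have "\<bar>\<xi> - \<xi>0\<bar> * (D + 1) < \<epsilon>" using \<xi> D by (simp add: less_divide_eq)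
    hence "\<bar>\<xi> - \<xi>0\<bar> * D \<le> \<epsilon>" using abs_ge_zero[of "\<xi> - \<xi>0"] by (simp add: algebra_simps)
    have "lognorm q (\<lambda>v. Pxi \<mu> \<xi> u v - Pxi \<mu> \<xi>0 u v) \<le> \<bar>\<xi> - \<xi>0\<bar> * D * lognorm q u"
      unfolding D_def by (rule lognorm_Pxi_diff_le[OF q W u])
    also have "\<dots> \<le> \<epsilon> * lognorm q u"
      by (rule mult_right_mono[OF \<open>\<bar>\<xi> - \<xi>0\<bar> * D \<le> \<epsilon>\<close> lognorm_nonneg[OF u]])
    finally show ?thesis .
  qed
  moreover have "\<epsilon> / (D + 1) > 0" using \<epsilon> D by simp
  ultimately show "\<exists>\<delta>>0. \<forall>\<xi>. \<bar>\<xi> - \<xi>0\<bar> < \<delta> \<longrightarrow>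
      (\<forall>u\<in>Clog q. lognorm q (\<lambda>v. Pxi \<mu> \<xi> u v - Pxi \<mu> \<xi>0 u v) \<le> \<epsilon> * lognorm q u)"
    by blast
qed

lemma Pxi_locally_lipschitz:
  assumes q: "q > 0" and W: "integrable \<mu> (log_weight (q + 1))"
  shows "\<forall>\<xi>0. \<exists>\<delta>>0. \<exists>L. \<forall>\<xi>1 \<xi>2. \<bar>\<xi>1 - \<xi>0\<bar> < \<delta> \<longrightarrow> \<bar>\<xi>2 - \<xi>0\<bar> < \<delta> \<longrightarrow>
           (\<forall>u\<in>Clog q. lognorm q (\<lambda>v. Pxi \<mu> \<xi>1 u v - Pxi \<mu> \<xi>2 u v)
                           \<le> L * \<bar>\<xi>1 - \<xi>2\<bar> * lognorm q u)"
proof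
  fix \<xi>0 :: real
  define L where "L = 2 * (3 + \<bar>\<xi>0\<bar>) * transfer_const q"
  have "lognorm q (\<lambda>v. Pxi \<mu> \<xi>1 u v - Pxi \<mu> \<xi>2 u v) \<le> L * \<bar>\<xi>1 - \<xi>2\<bar> * lognorm q u"
    if "\<bar>\<xi>2 - \<xi>0\<bar> < 1" "u \<in> Clog q" for \<xi>1 \<xi>2 u
  proof -
    have "2 * (2 + \<bar>\<xi>2\<bar>) * transfer_const q \<le> L"
      using that(1) transfer_const_nonneg[of q] by (simp add: L_def mult_right_mono)
    from mult_right_mono[OF mult_left_mono[OF this abs_ge_zero[of "\<xi>1 - \<xi>2"]] lognorm_nonneg[OF that(2)]]
    have "\<bar>\<xi>1 - \<xi>2\<bar> * (2 * (2 + \<bar>\<xi>2\<bar>) * transfer_const q) * lognorm q u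
        \<le> L * \<bar>\<xi>1 - \<xi>2\<bar> * lognorm q u"
      by (simp add: mult_ac)
    with lognorm_Pxi_diff_le[OF q W that(2), of \<xi>1 \<xi>2] show ?thesis by linarith
  qed
  thus "\<exists>\<delta>>0. \<exists>L. \<forall>\<xi>1 \<xi>2. \<bar>\<xi>1 - \<xi>0\<bar> < \<delta> \<longrightarrow> \<bar>\<xi>2 - \<xi>0\<bar> < \<delta> \<longrightarrow>
      (\<forall>u\<in>Clog q. lognorm q (\<lambda>v. Pxi \<mu> \<xi>1 u v - Pxi \<mu> \<xi>2 u v) \<le> L * \<bar>\<xi>1 - \<xi>2\<bar> * lognorm q u)"
    by (intro exI[of _ 1]) auto
qed

end


theorem proposition4p10:
  fixes \<mu> :: "cmat measure" and p :: real
  assumes "p > 1"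
    and "prob_space \<mu>"
    and "sets \<mu> = sets borel"
    and "AE g in \<mu>. det g = 1"
  shows "((\<integral>\<^sup>+ g. ennreal (\<bar>ln (opnorm g)\<bar> powr p) \<partial>\<mu>) < \<infinity> \<longrightarrow>
          (\<forall>\<xi>. \<exists>C. \<forall>u\<in>Clog (p - 1). Pxi \<mu> \<xi> u \<in> Clog (p - 1)
                 \<and> lognorm (p - 1) (Pxi \<mu> \<xi> u) \<le> C * lognorm (p - 1) u)
        \<and> (\<forall>\<xi>0. \<forall>\<epsilon>>0. \<exists>\<delta>>0. \<forall>\<xi>. \<bar>\<xi> - \<xi>0\<bar> < \<delta> \<longrightarrow>
             (\<forall>u\<in>Clog (p - 1).
                lognorm (p - 1) (\<lambda>v. Pxi \<mu> \<xi> u v - Pxi \<mu> \<xi>0 u v) \<le> \<epsilon> * lognorm (p - 1) u)))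
       \<and> ((\<integral>\<^sup>+ g. ennreal (\<bar>ln (opnorm g)\<bar> powr (p + 1)) \<partial>\<mu>) < \<infinity> \<longrightarrow>
          (\<forall>\<xi>0. \<exists>\<delta>>0. \<exists>L. \<forall>\<xi>1 \<xi>2. \<bar>\<xi>1 - \<xi>0\<bar> < \<delta> \<longrightarrow> \<bar>\<xi>2 - \<xi>0\<bar> < \<delta> \<longrightarrow>
             (\<forall>u\<in>Clog (p - 1).
                lognorm (p - 1) (\<lambda>v. Pxi \<mu> \<xi>1 u v - Pxi \<mu> \<xi>2 u v)
                  \<le> L * \<bar>\<xi>1 - \<xi>2\<bar> * lognorm (p - 1) u)))"
proof -
  interpret sl2_measure \<mu>
    using assms(2-4) by (simp add: sl2_measure_def sl2_measure_axioms_def)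
  have q: "p - 1 > 0" using assms(1) by simp
  have W: "integrable \<mu> (log_weight (p - 1 + 1))"
    if "(\<integral>\<^sup>+ g. ennreal (\<bar>ln (opnorm g)\<bar> powr p) \<partial>\<mu>) < \<infinity>"
    using integrable_log_weight[OF that] assms(1) by simp
  have W': "integrable \<mu> (log_weight (p - 1 + 1))"
    if "(\<integral>\<^sup>+ g. ennreal (\<bar>ln (opnorm g)\<bar> powr (p + 1)) \<partial>\<mu>) < \<infinity>"
    using integrable_log_weight[OF that] assms(1) by simp
  show ?thesis
    using Pxi_bounded[OF q W] Pxi_continuous[OF q W] Pxi_locally_lipschitz[OF q W'] by (intro conjI impI)
qed

end
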